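(* Fix $s>2$ and $\mu^*>0$. Then for every $\mu_1>\mu^*$ there exists $\epsilon>0$ such that, for all $\mu\in[\mu^*,\mu_1]$, $d\theta(f_{s,\mu})\ge\epsilon$ on $K_\mu\setminus\Delta$.
   Context: $f_{s,\mu}$ is the repressilator vector field $\dot x=\frac{\mu}{1+y^s}-x$, $\dot y=\frac{\mu}{1+z^s}-y$, $\dot z=\frac{\mu}{1+x^s}-z$ on $\mathbb{R}^3_+$. For $\mu>0$, $K_\mu:=\{(x,y,z)\colon\frac{\mu}{2+\mu^s}\le x,y,z\le\mu\}$. $\Delta:=\mathrm{span}\{(1,1,1)\}$; $\|\mathbf{x}_\perp\|^2=\tfrac23(x^2+y^2+z^2-xy-yz-zx)$; $d\theta:=\frac{1}{\sqrt3}\frac{(z-y)dx+(x-z)dy+(y-x)dz}{\|\mathbf{x}_\perp\|^2}$ on $\mathbb{R}^3\setminus\Delta$. *)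

theory Defs
  imports "HOL-Analysis.Analysis"
begin

text \<open>Points of R^3 are represented as triples (x, y, z). The Hill exponent s is real,
so y^s is written with powr (all points considered have positive coordinates).\<close>

definition repressilator :: "real \<Rightarrow> real \<Rightarrow> real \<times> real \<times> real \<Rightarrow> real \<times> real \<times> real" where
  "repressilator s \<mu> p = (case p of (x, y, z) \<Rightarrow>
     (\<mu> / (1 + y powr s) - x, \<mu> / (1 + z powr s) - y, \<mu> / (1 + x powr s) - z))"

definition K :: "real \<Rightarrow> real \<Rightarrow> (real \<times> real \<times> real) set" where
  "K s \<mu> = {(x, y, z). \<mu> / (2 + \<mu> powr s) \<le> x \<and> x \<le> \<mu> \<and>
                        \<mu> / (2 + \<mu> powr s) \<le> y \<and> y \<le> \<mu> \<and>
                        \<mu> / (2 + \<mu> powr s) \<le> z \<and> z \<le> \<mu>}"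

definition diag :: "(real \<times> real \<times> real) set" where
  "diag = {(t, t, t) | t. True}"

definition perp_norm_sq :: "real \<times> real \<times> real \<Rightarrow> real" where
  "perp_norm_sq p = (case p of (x, y, z) \<Rightarrow>
     (2/3) * (x^2 + y^2 + z^2 - x*y - y*z - z*x))"

definition dtheta :: "real \<times> real \<times> real \<Rightarrow> real \<times> real \<times> real \<Rightarrow> real" where
  "dtheta p v = (case p of (x, y, z) \<Rightarrow> case v of (a, b, c) \<Rightarrow>
     (1 / sqrt 3) * ((z - y) * a + (x - z) * b + (y - x) * c) / perp_norm_sq p)"

end

theory Submission
  imports Defs
begin

text \<open>Write the field as \<open>(g y - x, g z - y, g x - z)\<close> with the Hill function
  \<open>g t = \<mu> / (1 + t\<^sup>s)\<close>. The numerator of \<open>d\<theta>\<close> equals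
  \<open>(z - y) h y + (x - z) h z + (y - x) h x + (3/2) m \<parallel>x\<^sub>\<perp>\<parallel>\<^sup>2\<close> for \<open>h t = g t + m t\<close>,
  and the cyclic sum is nonnegative whenever \<open>h\<close> is nonincreasing. On the compact box
  \<open>[\<mu>\<^sup>* / (2 + \<mu>\<^sub>1\<^sup>s), \<mu>\<^sub>1]\<close>, which contains every \<open>K\<^sub>\<mu>\<close> with \<open>\<mu> \<in> [\<mu>\<^sup>*, \<mu>\<^sub>1]\<close>, the slope
  \<open>|g'|\<close> is bounded below uniformly in \<open>\<mu>\<close>, so a fixed \<open>m > 0\<close> keeps \<open>h\<close> nonincreasing,
  giving \<open>d\<theta>(f) \<ge> (\<surd>3/2) m\<close>.\<close>

lemma cyclic_sum_antimono_nonneg: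
  fixes h :: "real \<Rightarrow> real"
  assumes antimono: "\<And>u v. u \<in> S \<Longrightarrow> v \<in> S \<Longrightarrow> u \<le> v \<Longrightarrow> h v \<le> h u"
    and S: "x \<in> S" "y \<in> S" "z \<in> S"
  shows "0 \<le> (z - y) * h y + (x - z) * h z + (y - x) * h x"
proof -
  let ?E = "(z - y) * h y + (x - z) * h z + (y - x) * h x"
  have r1: "?E = (z - y) * (h y - h z) + (y - x) * (h x - h z)"
    and r2: "?E = (x - z) * (h z - h x) + (z - y) * (h y - h x)"
    and r3: "?E = (y - x) * (h x - h y) + (x - z) * (h z - h y)"
    by (simp_all add: algebra_simps)
  have h: "h v \<le> h u" if "u \<in> {x, y, z}" "v \<in> {x, y, z}" "u \<le> v" for u v
    using antimono S that by auto
  consider "x \<le> y" "y \<le> z" | "y \<le> x" "z \<le> y" | "z \<le> x" "x \<le> y"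
    | "x \<le> z" "y \<le> x" | "y \<le> z" "z \<le> x" | "z \<le> y" "x \<le> z"
    by linarith
  then show ?thesis
  proof cases
    case 1
    with h[of y z] h[of x z] show ?thesis
      unfolding r1 by (intro add_nonneg_nonneg mult_nonneg_nonneg) auto
  next
    case 2
    with h[of z y] h[of z x] show ?thesis
      unfolding r1 by (intro add_nonneg_nonneg mult_nonpos_nonpos) auto
  next
    case 3
    with h[of x y] h[of z y] show ?thesis
      unfolding r3 by (intro add_nonneg_nonneg mult_nonneg_nonneg) auto
  next
    case 4
    with h[of x z] h[of y x] show ?thesis
      unfolding r2 by (intro add_nonneg_nonneg mult_nonpos_nonpos mult_nonneg_nonneg) auto
  next
    case 5
    with h[of z x] h[of y x] show ?thesis
      unfolding r2 by (intro add_nonneg_nonneg mult_nonneg_nonneg) auto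
  next
    case 6
    with h[of z y] h[of x z] show ?thesis
      unfolding r1 by (intro add_nonneg_nonneg mult_nonpos_nonpos mult_nonneg_nonneg) auto
  qed
qed

lemma perp_norm_sq_pos:
  assumes "p \<notin> diag"
  shows "perp_norm_sq p > 0"
proof -
  obtain x y z where p: "p = (x, y, z)" by (cases p) auto
  have "\<not> (x = y \<and> y = z)" using assms unfolding p diag_def by auto
  then have "0 < (x - y)^2 + (y - z)^2" by (auto simp: add_pos_nonneg add_nonneg_pos)
  then have "0 < (x - y)^2 + (y - z)^2 + (z - x)^2" by (simp add: add_pos_nonneg)
  moreover have "perp_norm_sq p = ((x - y)^2 + (y - z)^2 + (z - x)^2) / 3"
    unfolding p perp_norm_sq_def by (simp add: power2_eq_square field_simps)
  ultimately show ?thesis by simp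
qed

lemma dtheta_cyclic_field_ge:
  fixes g :: "real \<Rightarrow> real"
  assumes antimono: "\<And>u v. u \<in> S \<Longrightarrow> v \<in> S \<Longrightarrow> u \<le> v \<Longrightarrow> g v + m * v \<le> g u + m * u"
    and S: "x \<in> S" "y \<in> S" "z \<in> S"
    and off_diag: "(x, y, z) \<notin> diag"
  shows "sqrt 3 / 2 * m \<le> dtheta (x, y, z) (g y - x, g z - y, g x - z)"
proof -
  define h where "h t = g t + m * t" for t
  define N where "N = perp_norm_sq (x, y, z)"
  define A where "A = (z - y) * h y + (x - z) * h z + (y - x) * h x"
  have N_pos: "N > 0" unfolding N_def using perp_norm_sq_pos[OF off_diag] .
  have A_nonneg: "0 \<le> A"
    unfolding A_def by (rule cyclic_sum_antimono_nonneg[of S]) (use antimono S in \<open>auto simp: h_def\<close>)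
  have numerator: "(z - y) * (g y - x) + (x - z) * (g z - y) + (y - x) * (g x - z) = A + 3 / 2 * m * N"
    unfolding A_def h_def N_def perp_norm_sq_def by (simp add: field_simps power2_eq_square)
  have "dtheta (x, y, z) (g y - x, g z - y, g x - z) = (A + 3 / 2 * m * N) / N / sqrt 3"
    unfolding dtheta_def N_def[symmetric] using numerator by (simp add: mult.commute)
  also have "\<dots> = (A / N + 3 / 2 * m) / sqrt 3"
    using N_pos by (simp add: add_divide_distrib)
  finally have "dtheta (x, y, z) (g y - x, g z - y, g x - z) = (A / N + 3 / 2 * m) / sqrt 3" .
  moreover have "(3 / 2 * m) / sqrt 3 \<le> (A / N + 3 / 2 * m) / sqrt 3"
    using A_nonneg N_pos by (intro divide_right_mono) auto
  moreover have "sqrt 3 / 2 * m = (3 / 2 * m) / sqrt 3"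
    by (simp add: field_simps real_sqrt_mult[symmetric])
  ultimately show ?thesis by simp
qed

text \<open>\<open>s \<ge> 1\<close> makes \<open>t\<^sup>s\<^sup>-\<^sup>1\<close> increasing, so \<open>m\<close> bounds the slope
  \<open>\<mu> s t\<^sup>s\<^sup>-\<^sup>1 / (1 + t\<^sup>s)\<^sup>2\<close> of the Hill term from below on all of \<open>[a, b]\<close>.\<close>

lemma hill_plus_linear_antimono:
  fixes a b s \<mu>0 \<mu> :: real
  assumes "a > 0" "s \<ge> 1" "\<mu> \<ge> \<mu>0" "\<mu>0 > 0"
    and uv: "u \<in> {a..b}" "v \<in> {a..b}" "u \<le> v"
  defines "m \<equiv> \<mu>0 * s * a powr (s - 1) / (1 + b powr s)^2"
  shows "\<mu> / (1 + v powr s) + m * v \<le> \<mu> / (1 + u powr s) + m * u"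
proof (rule DERIV_nonpos_imp_nonincreasing[OF uv(3)])
  fix t assume "u \<le> t" "t \<le> v"
  then have t: "a \<le> t" "t \<le> b" using uv by auto
  then have t_pos: "t > 0" using assms by simp
  have denom_pos: "1 + t powr s > 0" by (simp add: add_pos_nonneg)
  define D where "D = \<mu> * (s * t powr (s - 1)) / (1 + t powr s)^2"
  have deriv: "((\<lambda>t. \<mu> / (1 + t powr s) + m * t) has_real_derivative (m - D)) (at t)"
    unfolding D_def using t_pos denom_pos
    by (auto intro!: derivative_eq_intros simp: power2_eq_square field_simps)
  have "\<mu>0 * s * a powr (s - 1) \<le> \<mu> * (s * t powr (s - 1))"
    using assms t by (auto intro!: mult_mono powr_mono2)
  moreover have "(1 + t powr s)^2 \<le> (1 + b powr s)^2"
    using t t_pos assms by (intro power_mono) (auto intro: powr_mono2)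
  ultimately have "m \<le> D"
    unfolding m_def D_def using assms t_pos denom_pos by (intro frac_le) auto
  with deriv show "\<exists>y. ((\<lambda>t. \<mu> / (1 + t powr s) + m * t) has_real_derivative y) (at t) \<and> y \<le> 0"
    by (intro exI[of _ "m - D"]) auto
qed

lemma K_subset_box:
  assumes "0 \<le> s" "0 < \<mu>star" "\<mu>star \<le> \<mu>" "\<mu> \<le> \<mu>1"
  shows "K s \<mu> \<subseteq> {\<mu>star / (2 + \<mu>1 powr s)..\<mu>1} \<times> {\<mu>star / (2 + \<mu>1 powr s)..\<mu>1} \<times> {\<mu>star / (2 + \<mu>1 powr s)..\<mu>1}"
proof -
  have "\<mu> powr s \<le> \<mu>1 powr s" using assms by (intro powr_mono2) auto
  then have "\<mu>star / (2 + \<mu>1 powr s) \<le> \<mu> / (2 + \<mu> powr s)"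
    using assms by (intro frac_le) (auto simp: add_pos_nonneg)
  then show ?thesis using assms unfolding K_def by auto
qed

theorem proposition4:
  fixes s \<mu>star \<mu>1 :: real
  assumes "s > 2" and "\<mu>star > 0" and "\<mu>1 > \<mu>star"
  shows "\<exists>\<epsilon>>0. \<forall>\<mu>\<in>{\<mu>star..\<mu>1}. \<forall>p \<in> K s \<mu> - diag.
           dtheta p (repressilator s \<mu> p) \<ge> \<epsilon>"
proof -
  define a where "a = \<mu>star / (2 + \<mu>1 powr s)"
  define m where "m = \<mu>star * s * a powr (s - 1) / (1 + \<mu>1 powr s)^2"
  have a_pos: "a > 0" using assms unfolding a_def by (simp add: add_pos_nonneg)
  have "1 + \<mu>1 powr s > 0" by (simp add: add_pos_nonneg)
  then have m_pos: "m > 0"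
    using assms a_pos unfolding m_def by (intro divide_pos_pos mult_pos_pos) auto
  have "sqrt 3 / 2 * m \<le> dtheta p (repressilator s \<mu> p)"
    if \<mu>: "\<mu> \<in> {\<mu>star..\<mu>1}" and p: "p \<in> K s \<mu> - diag" for \<mu> p
  proof -
    obtain x y z where p_eq: "p = (x, y, z)" by (cases p) auto
    have "x \<in> {a..\<mu>1}" "y \<in> {a..\<mu>1}" "z \<in> {a..\<mu>1}"
      using K_subset_box[of s \<mu>star \<mu> \<mu>1] p \<mu> assms unfolding p_eq a_def by auto
    moreover have "\<mu> / (1 + v powr s) + m * v \<le> \<mu> / (1 + u powr s) + m * u"
      if "u \<in> {a..\<mu>1}" "v \<in> {a..\<mu>1}" "u \<le> v" for u v
      using that \<mu> assms a_pos unfolding m_def by (intro hill_plus_linear_antimono) auto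
    ultimately have "sqrt 3 / 2 * m \<le> dtheta (x, y, z)
        ((\<lambda>t. \<mu> / (1 + t powr s)) y - x, (\<lambda>t. \<mu> / (1 + t powr s)) z - y,
         (\<lambda>t. \<mu> / (1 + t powr s)) x - z)"
      using p unfolding p_eq by (intro dtheta_cyclic_field_ge[where S = "{a..\<mu>1}"]) auto
    then show ?thesis unfolding p_eq repressilator_def by simp
  qed
  moreover have "sqrt 3 / 2 * m > 0" using m_pos by simp
  ultimately show ?thesis by blast
qed

end
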